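(* For a pattern $\alpha$ let $H_\alpha(x)=\sum_{n\ge0}p_n(1213,\alpha)x^n$. Let $\rho=1(\tau+1)$ be a pattern of size at least two, where $\tau$ is a partition whose rightmost letter is greater than $1$. Then \[H_\rho(x)=1+\frac{x}{1-x}H_\tau(x)+\frac{x^2}{(1-x)(1-2x)}\bigl(H_\tau(x)-1\bigr).\] Consequently, if $p_n(1213,\tau)=p_n(1213,\tau')$ for all $n$ (with $\tau,\tau'$ both satisfying the hypothesis), then $p_n(1213,1(\tau+1))=p_n(1213,1(\tau'+1))$ for all $n$.
   Context: Set partitions of $[n]$ are written in canonical sequential form (restricted growth words). Pattern containment means having a subsequence order-isomorphic to the pattern; $p_n(T)$ is the number of partitions of $[n]$ avoiding every pattern in $T$. $\tau+1$ adds $1$ to every letter of $\tau$. *)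

theory Defs
  imports "HOL-Computational_Algebra.Formal_Power_Series" "HOL-Library.Sublist"
begin

text \<open>Restricted growth words (canonical sequential form of a set partition),
  letters are positive naturals starting with 1.\<close>
definition rgw :: "nat list \<Rightarrow> bool" where
  "rgw w \<longleftrightarrow> (\<forall>i<length w. 1 \<le> w ! i \<and>
       w ! i \<le> Suc (foldr max (take i w) 0))"

definition order_iso :: "nat list \<Rightarrow> nat list \<Rightarrow> bool" where
  "order_iso a b \<longleftrightarrow> length a = length b \<and>
     (\<forall>i<length a. \<forall>j<length a. (a ! i \<le> a ! j \<longleftrightarrow> b ! i \<le> b ! j))"

definition contains :: "nat list \<Rightarrow> nat list \<Rightarrow> bool" where
  "contains w p \<longleftrightarrow> (\<exists>u. subseq u w \<and> order_iso u p)"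

definition pn :: "nat \<Rightarrow> nat list set \<Rightarrow> nat" where
  "pn n T = card {w. rgw w \<and> length w = n \<and> (\<forall>t\<in>T. \<not> contains w t)}"

definition H :: "nat list \<Rightarrow> rat fps" where
  "H a = Abs_fps (\<lambda>n. of_nat (pn n {[1,2,1,3], a}))"

definition plus1 :: "nat list \<Rightarrow> nat list" where
  "plus1 t = map Suc t"

end

theory Submission
  imports Defs
begin

text \<open>A nonempty RGW avoiding 1213 factors uniquely as \<open>1\<^sup>j (v + 1) s\<close> with \<open>j \<ge> 1\<close>, where
  \<open>v + 1\<close> is the maximal block of letters \<open>\<ge> 2\<close> after the initial 1s and \<open>s\<close> is empty or
  starts with 1. The block \<open>v + 1\<close> begins with 2, so avoiding 1213 forces \<open>s\<close> to be a word over
  \<open>{1, 2}\<close>, and then the whole word avoids 1213 iff \<open>v\<close> does. Since \<open>\<tau>\<close> starts with 1 and ends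
  above it, an occurrence of \<open>\<rho> = 1(\<tau> + 1)\<close> places \<open>\<tau> + 1\<close> on letters \<open>\<ge> 2\<close> ending in a
  letter \<open>\<ge> 3\<close>, i.e. inside \<open>v + 1\<close>; so the word avoids \<open>\<rho>\<close> iff \<open>v\<close> avoids \<open>\<tau>\<close>.
  Counting the factorisations, the run \<open>1\<^sup>j\<close> contributes \<open>x/(1 - x)\<close>, \<open>v\<close> contributes \<open>H\<^sub>\<tau>\<close>,
  and a nonempty \<open>s\<close>, which requires \<open>v \<noteq> []\<close>, contributes \<open>x/(1 - 2x)\<close>.\<close>

declare foldr_append [simp del] foldr_replicate [simp del]

lemma foldr_max_append: "foldr max (xs @ ys) (0::nat) = max (foldr max xs 0) (foldr max ys 0)"
  by (induct xs) auto

lemma foldr_max_upper: "x \<in> set xs \<Longrightarrow> x \<le> foldr max xs (0::nat)"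
  by (induct xs) auto

lemma foldr_max_least: "(\<And>x. x \<in> set xs \<Longrightarrow> x \<le> m) \<Longrightarrow> foldr max xs (0::nat) \<le> m"
  by (induct xs) auto

lemma foldr_max_replicate: "1 \<le> j \<Longrightarrow> foldr max (replicate j x) (0::nat) = x"
  by (induct j) (auto simp: le_Suc_eq)

lemma foldr_max_map_Suc: "foldr max (map Suc v) 0 = (if v = [] then 0 else Suc (foldr max v 0))"
  by (induct v) auto

lemma rgw_Nil [simp]: "rgw []"
  by (simp add: rgw_def)

lemma rgw_snoc_iff: "rgw (w @ [x]) \<longleftrightarrow> rgw w \<and> 1 \<le> x \<and> x \<le> Suc (foldr max w 0)"
  unfolding rgw_def by (auto simp: nth_append less_Suc_eq)

lemma rgw_appendD: "rgw (u @ s) \<Longrightarrow> rgw u"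
  unfolding rgw_def
proof (intro allI impI)
  fix i
  assume "\<forall>i<length (u @ s). 1 \<le> (u @ s) ! i \<and> (u @ s) ! i \<le> Suc (foldr max (take i (u @ s)) 0)"
    and "i < length u"
  then show "1 \<le> u ! i \<and> u ! i \<le> Suc (foldr max (take i u) 0)"
    by (auto simp: nth_append dest!: spec[of _ i])
qed

lemma rgw_letter_bounds: "rgw w \<Longrightarrow> x \<in> set w \<Longrightarrow> 1 \<le> x \<and> x \<le> length w"
proof (induct w arbitrary: x rule: rev_induct)
  case (snoc y w)
  then have "rgw w" "1 \<le> y" "y \<le> Suc (foldr max w 0)"
    by (auto simp: rgw_snoc_iff)
  moreover have "foldr max w 0 \<le> length w"
    using snoc \<open>rgw w\<close> by (auto intro: foldr_max_least)
  ultimately show ?case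
    using snoc by fastforce
qed simp

lemma rgw_hd: "rgw w \<Longrightarrow> w \<noteq> [] \<Longrightarrow> hd w = 1"
  unfolding rgw_def by (cases w) force+

lemma rgw_replicate_one: "rgw (replicate j 1)"
proof (induct j)
  case (Suc j)
  then show ?case
    unfolding replicate_Suc replicate_append_same[symmetric] rgw_snoc_iff by simp
qed simp

lemma rgw_ones_shift_iff:
  assumes "1 \<le> j" "\<forall>x\<in>set v. 1 \<le> x"
  shows "rgw (replicate j 1 @ map Suc v) \<longleftrightarrow> rgw v"
  using assms(2)
proof (induct v rule: rev_induct)
  case Nil
  then show ?case
    using rgw_replicate_one by simp
next
  case (snoc x v)
  have "foldr max (replicate j 1 @ map Suc v) 0 = (if v = [] then 1 else Suc (foldr max v 0))"
    using assms(1) by (simp add: foldr_max_append foldr_max_replicate foldr_max_map_Suc)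
  then show ?case
    using snoc by (auto simp: rgw_snoc_iff simp flip: append_assoc)
qed

lemma rgw_append_ones_twos:
  assumes "rgw u" "u \<noteq> []" "set s \<subseteq> {1, 2}"
  shows "rgw (u @ s)"
  using assms(3)
proof (induct s rule: rev_induct)
  case (snoc x s)
  have "1 \<le> foldr max u 0"
    using foldr_max_upper[OF hd_in_set[OF assms(2)]] rgw_hd[OF assms(1,2)] by simp
  then have "1 \<le> foldr max (u @ s) 0"
    by (simp add: foldr_max_append)
  with snoc show ?case
    by (auto simp: rgw_snoc_iff simp flip: append_assoc)
qed (use assms in simp)

lemma rgw_letter_after_ones:
  assumes "rgw (replicate j 1 @ x # r)" "1 \<le> j"
  shows "x \<le> 2"
  using rgw_appendD[of "replicate j 1 @ [x]" r] assms
  by (simp add: rgw_snoc_iff foldr_max_replicate)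

lemma set_subseq: "subseq xs ys \<Longrightarrow> set xs \<subseteq> set ys"
  by (metis set_nths_subset subseq_conv_nths)

lemma subseq_map_rightE:
  assumes "subseq xs (map f ys)"
  obtains zs where "xs = map f zs" "subseq zs ys"
  using assms by (metis nths_map subseq_conv_nths)

lemma subseq_append_rightD:
  assumes "subseq u (r @ s)" "u \<noteq> []" "last u \<notin> set s"
  shows "subseq u r"
proof -
  obtain u1 u2 where u: "u = u1 @ u2" "subseq u1 r" "subseq u2 s"
    using assms(1) by (rule subseq_appendE)
  have "u2 = []"
    using u assms(3) set_subseq[OF u(3)] by (metis last_appendR last_in_set subsetD)
  with u show ?thesis
    by simp
qed

lemma order_iso_map_Suc_left [simp]: "order_iso (map Suc u) t \<longleftrightarrow> order_iso u t"
  by (simp add: order_iso_def)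

lemma order_iso_map_Suc_right [simp]: "order_iso u (map Suc t) \<longleftrightarrow> order_iso u t"
  by (auto simp: order_iso_def)

lemma order_iso_length: "order_iso u t \<Longrightarrow> length u = length t"
  by (simp add: order_iso_def)

lemma order_iso_Cons_min:
  assumes "order_iso u t" "\<forall>x\<in>set u. a < x" "\<forall>x\<in>set t. b < x"
  shows "order_iso (a # u) (b # t)"
proof -
  have len: "length u = length t"
    using assms(1) by (rule order_iso_length)
  have "a < u ! i" "b < t ! i" if "i < length u" for i
    using assms(2,3) len that by auto
  with assms(1) len show ?thesis
    unfolding order_iso_def by (auto simp: nth_Cons less_Suc_eq_0_disj; meson leD less_imp_le)
qed

lemma order_iso_ConsD: "order_iso (a # u) (b # t) \<Longrightarrow> order_iso u t"
  unfolding order_iso_def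
proof (intro conjI allI impI)
  fix i k
  assume iso: "length (a # u) = length (b # t) \<and>
    (\<forall>i<length (a # u). \<forall>k<length (a # u). ((a # u) ! i \<le> (a # u) ! k) = ((b # t) ! i \<le> (b # t) ! k))"
    and "i < length u" "k < length u"
  then show "(u ! i \<le> u ! k) = (t ! i \<le> t ! k)"
    using iso[THEN conjunct2, rule_format, of "Suc i" "Suc k"] by simp
qed simp_all

lemma order_iso_Cons_minD:
  assumes "order_iso (a # u) (b # t)" "\<forall>x\<in>set t. b < x"
  shows "\<forall>x\<in>set u. a < x"
proof
  fix x
  assume "x \<in> set u"
  then obtain k where k: "k < length u" "x = u ! k"
    by (auto simp: in_set_conv_nth)
  moreover have "length u = length t"
    using order_iso_length[OF assms(1)] by simp
  ultimately show "a < x"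
    using assms(1)[unfolded order_iso_def, THEN conjunct2, rule_format, of "Suc k" 0] assms(2)
    by (auto simp: not_le[symmetric])
qed

lemma order_iso_hd_less_last:
  assumes "order_iso u t" "t \<noteq> []" "hd t < last t"
  shows "hd u < last u"
proof -
  have len: "length u = length t"
    using assms(1) by (rule order_iso_length)
  then have "\<not> u ! (length u - 1) \<le> u ! 0"
    using assms(1)[unfolded order_iso_def, THEN conjunct2, rule_format, of "length u - 1" 0] assms(2,3)
    by (simp add: hd_conv_nth last_conv_nth)
  moreover have "u \<noteq> []"
    using len assms(2) by auto
  ultimately show ?thesis
    by (simp add: hd_conv_nth last_conv_nth)
qed

lemma order_iso_1213_iff:
  "order_iso u [1, 2, 1, 3] \<longleftrightarrow> (\<exists>a b c. u = [a, b, a, c] \<and> a < b \<and> b < c)"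
proof
  assume iso: "order_iso u [1, 2, 1, 3]"
  then have "length u = 4"
    by (simp add: order_iso_def)
  then obtain a b a' c where u: "u = [a, b, a', c]"
    by (auto simp: length_Suc_conv numeral_eq_Suc)
  note iso' = iso[unfolded u order_iso_def, THEN conjunct2, rule_format]
  have "a' = a" "a < b" "b < c"
    using iso'[of 0 2] iso'[of 2 0] iso'[of 1 0] iso'[of 3 1] by auto
  with u show "\<exists>a b c. u = [a, b, a, c] \<and> a < b \<and> b < c"
    by blast
qed (auto simp: order_iso_def less_Suc_eq)

section \<open>Occurrences in words of the form \<open>1\<^sup>j (v + 1) s\<close>\<close>

lemma contains_shifted_infix: "contains v t \<Longrightarrow> contains (xs @ map Suc v @ ys) t"
  unfolding contains_def
  by (metis order_iso_map_Suc_left subseq_drop_many subseq_map subseq_rev_drop_many)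

lemma contains_Cons_plus1_shifted:
  assumes "contains v t" "\<forall>x\<in>set v. 1 \<le> x" "\<forall>x\<in>set t. 1 \<le> x"
  shows "contains (1 # xs @ map Suc v @ ys) (1 # plus1 t)"
proof -
  obtain u where u: "subseq u v" "order_iso u t"
    using assms(1) by (auto simp: contains_def)
  have "subseq (1 # map Suc u) (1 # xs @ map Suc v @ ys)"
    using subseq_map[OF u(1), of Suc] by (simp add: subseq_drop_many subseq_rev_drop_many)
  moreover have "\<forall>x\<in>set (map Suc u). 1 < x"
    using set_subseq[OF u(1)] assms(2) by fastforce
  then have "order_iso (1 # map Suc u) (1 # plus1 t)"
    using u(2) assms(3) by (intro order_iso_Cons_min) (auto simp: plus1_def)
  ultimately show ?thesis
    unfolding contains_def by blast
qed

lemma subseq_shifted_blockE: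
  assumes "subseq u (replicate j 1 @ map Suc v @ s)" "set s \<subseteq> {1, 2}"
    and "u \<noteq> []" "3 \<le> last u" "\<forall>x\<in>set u. 2 \<le> x"
  obtains u' where "u = map Suc u'" "subseq u' v"
proof -
  have "last u \<notin> set s"
    using assms(2,4) by auto
  then have "subseq u (replicate j 1 @ map Suc v)"
    using subseq_append_rightD[of u "replicate j 1 @ map Suc v" s] assms(1,3) by simp
  then obtain u1 u2 where u: "u = u1 @ u2" "subseq u1 (replicate j 1)" "subseq u2 (map Suc v)"
    by (rule subseq_appendE)
  have "u1 = []"
    using set_subseq[OF u(2)] assms(5) u(1) by (cases u1) auto
  with u that show ?thesis
    by (auto elim: subseq_map_rightE)
qed

lemma contains_1213_shifted_blockD:
  assumes "contains (replicate j 1 @ map Suc v @ s) [1, 2, 1, 3]"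
    and "set s \<subseteq> {1, 2}" "\<forall>x\<in>set v. 1 \<le> x"
  shows "contains v [1, 2, 1, 3]"
proof -
  let ?w = "replicate j 1 @ map Suc v @ s"
  obtain a b c where occ: "subseq [a, b, a, c] ?w" "a < b" "b < c"
    using assms(1) unfolding contains_def order_iso_1213_iff by blast
  have "a \<in> set ?w"
    using set_subseq[OF occ(1)] by auto
  then have "1 \<le> a"
    using assms(2) by auto
  show ?thesis
  proof (cases "a = 1")
    case True
    have "c \<notin> set s"
      using occ(2,3) assms(2) True by auto
    then have "subseq [a, b, a, c] (replicate j 1 @ map Suc v)"
      using subseq_append_rightD[of "[a, b, a, c]" "replicate j 1 @ map Suc v" s] occ(1) by simp
    then obtain u1 u2 where u: "[a, b, a, c] = u1 @ u2"
      "subseq u1 (replicate j 1)" "subseq u2 (map Suc v)"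
      by (rule subseq_appendE)
    have "set u1 \<subseteq> {1}" "\<forall>x\<in>set u2. 2 \<le> x"
      using set_subseq[OF u(2)] set_subseq[OF u(3)] assms(3) by fastforce+
    with u(1) True occ(2) show ?thesis
      by (auto simp: Cons_eq_append_conv)
  next
    case False
    then have "\<forall>x\<in>set [a, b, a, c]. 2 \<le> x" "3 \<le> last [a, b, a, c]"
      using \<open>1 \<le> a\<close> occ(2,3) by auto
    then obtain u' where "[a, b, a, c] = map Suc u'" "subseq u' v"
      using subseq_shifted_blockE[OF occ(1) assms(2)] by blast
    with occ(2,3) show ?thesis
      unfolding contains_def by (metis order_iso_1213_iff order_iso_map_Suc_left)
  qed
qed

lemma contains_Cons_plus1_shifted_blockD:
  assumes "contains (replicate j 1 @ map Suc v @ s) (1 # plus1 t)"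
    and "set s \<subseteq> {1, 2}" "rgw t" "t \<noteq> []" "1 < last t"
  shows "contains v t"
proof -
  let ?w = "replicate j 1 @ map Suc v @ s"
  obtain u where u: "subseq u ?w" "order_iso u (1 # map Suc t)"
    using assms(1) by (auto simp: contains_def plus1_def)
  then obtain a ut where ut: "u = a # ut"
    by (cases u) (auto simp: order_iso_def)
  have iso: "order_iso ut t"
    using u(2) ut by (auto dest: order_iso_ConsD)
  have "a \<in> set ?w"
    using set_subseq[OF u(1)] ut by auto
  then have "1 \<le> a"
    using assms(2) by auto
  moreover have "\<forall>x\<in>set ut. a < x"
    using order_iso_Cons_minD[of a ut 1 "map Suc t"] u(2) ut rgw_letter_bounds[OF assms(3)]
    by fastforce
  ultimately have above: "\<forall>x\<in>set ut. 2 \<le> x"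
    by fastforce
  have "ut \<noteq> []"
    using order_iso_length[OF iso] assms(4) by auto
  have "hd ut < last ut"
    using order_iso_hd_less_last[OF iso assms(4)] rgw_hd[OF assms(3,4)] assms(5) by simp
  then have "3 \<le> last ut"
    using above hd_in_set[OF \<open>ut \<noteq> []\<close>] by fastforce
  moreover have "subseq ut ?w"
    using u(1) ut by (auto intro: subseq_Cons')
  ultimately obtain u' where "ut = map Suc u'" "subseq u' v"
    using subseq_shifted_blockE[OF _ assms(2) \<open>ut \<noteq> []\<close> _ above] by blast
  with iso show ?thesis
    unfolding contains_def by auto
qed

section \<open>The factorisation of the avoiders of \<open>1(\<tau> + 1)\<close>\<close>

definition avoiders :: "nat list \<Rightarrow> nat \<Rightarrow> nat list set" where
  "avoiders t n = {w. rgw w \<and> length w = n \<and> \<not> contains w [1, 2, 1, 3] \<and> \<not> contains w t}"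

lemma pn_eq_card_avoiders: "pn n {[1, 2, 1, 3], t} = card (avoiders t n)"
  unfolding pn_def avoiders_def by (rule arg_cong[where f = card]) auto

lemma finite_avoiders: "finite (avoiders t n)"
proof (rule finite_subset)
  show "avoiders t n \<subseteq> {w. set w \<subseteq> {0..n} \<and> length w = n}"
    using rgw_letter_bounds by (fastforce simp: avoiders_def)
qed (rule finite_lists_length_eq, simp)

lemma avoiders_0: "t \<noteq> [] \<Longrightarrow> avoiders t 0 = {[]}"
  by (auto simp: avoiders_def contains_def order_iso_def)

text \<open>A word is split as \<open>1\<^sup>j (v + 1) s\<close>: its initial run of 1s, the maximal following block
  of letters \<open>\<ge> 2\<close> (shifted down by one), and the remainder, which is empty or starts with 1.\<close>

definition join_blocks :: "nat \<times> nat list \<times> nat list \<Rightarrow> nat list" where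
  "join_blocks = (\<lambda>(j, v, s). replicate j 1 @ map Suc v @ s)"

lemma join_blocks_apply [simp]: "join_blocks (j, v, s) = replicate j 1 @ map Suc v @ s"
  by (simp add: join_blocks_def)

definition split_blocks :: "nat list \<Rightarrow> nat \<times> nat list \<times> nat list" where
  "split_blocks w =
     (let r = dropWhile (\<lambda>x. x = 1) w
      in (length (takeWhile (\<lambda>x. x = 1) w),
          map (\<lambda>x. x - 1) (takeWhile (\<lambda>x. x \<noteq> 1) r), dropWhile (\<lambda>x. x \<noteq> 1) r))"

definition block_triples :: "nat list \<Rightarrow> nat \<Rightarrow> (nat \<times> nat list \<times> nat list) set" where
  "block_triples t n = {(j, v, s). 1 \<le> j \<and> v \<in> avoiders t (length v) \<and> j + length v + length s = n \<and>
     (s = [] \<or> v \<noteq> [] \<and> hd s = 1 \<and> set s \<subseteq> {1, 2})}"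

lemma split_join_blocks:
  assumes "\<forall>x\<in>set v. 1 \<le> x" "s = [] \<or> v \<noteq> [] \<and> hd s = 1"
  shows "split_blocks (join_blocks (j, v, s)) = (j, v, s)"
proof -
  have no_one: "\<forall>x\<in>set (map Suc v). x \<noteq> 1"
    using assms(1) by auto
  have tail: "takeWhile (\<lambda>x. x = 1) (map Suc v @ s) = []"
    "dropWhile (\<lambda>x. x = 1) (map Suc v @ s) = map Suc v @ s"
    "takeWhile (\<lambda>x. x \<noteq> 1) s = []" "dropWhile (\<lambda>x. x \<noteq> 1) s = s"
    using assms by (cases v; cases s; auto)+
  have "takeWhile (\<lambda>x. x = 1) (join_blocks (j, v, s)) = replicate j 1"
    using tail(1) by (simp, subst takeWhile_append2) auto
  moreover have "dropWhile (\<lambda>x. x = 1) (join_blocks (j, v, s)) = map Suc v @ s"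
    using tail(2) by (simp, subst dropWhile_append2) auto
  moreover have "takeWhile (\<lambda>x. x \<noteq> 1) (map Suc v @ s) = map Suc v"
    using tail(3) no_one by (subst takeWhile_append2) auto
  moreover have "dropWhile (\<lambda>x. x \<noteq> 1) (map Suc v @ s) = s"
    using tail(4) no_one by (subst dropWhile_append2) auto
  ultimately show ?thesis
    by (simp add: split_blocks_def Let_def comp_def)
qed

lemma join_split_blocks:
  assumes "rgw w" "w \<noteq> []" "split_blocks w = (j, v, s)"
  shows "join_blocks (j, v, s) = w" "1 \<le> j" "\<forall>x\<in>set v. 1 \<le> x" "s = [] \<or> v \<noteq> [] \<and> hd s = 1"
proof -
  define r where "r = dropWhile (\<lambda>x. x = 1) w"
  define m where "m = takeWhile (\<lambda>x. x \<noteq> 1) r"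
  have split: "j = length (takeWhile (\<lambda>x. x = 1) w)" "v = map (\<lambda>x. x - 1) m"
    "s = dropWhile (\<lambda>x. x \<noteq> 1) r"
    using assms(3) by (simp_all add: split_blocks_def Let_def r_def m_def)
  have "takeWhile (\<lambda>x. x = 1) w = replicate j 1"
    using split(1) by (metis (mono_tags) set_takeWhileD replicate_length_same)
  then have w: "w = replicate j 1 @ m @ s"
    using split(3) unfolding r_def m_def by (metis takeWhile_dropWhile_id)
  have "\<forall>x\<in>set m. 2 \<le> x"
    using rgw_letter_bounds[OF assms(1)] w unfolding m_def
    by (fastforce dest: set_takeWhileD)
  then have m: "m = map Suc v"
    unfolding split(2) by (induct m) auto
  then show "join_blocks (j, v, s) = w"
    using w by (simp add: join_blocks_def)
  show "1 \<le> j"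
    using rgw_hd[OF assms(1,2)] assms(2) split(1) by (cases w) auto
  show "\<forall>x\<in>set v. 1 \<le> x"
    using \<open>\<forall>x\<in>set m. 2 \<le> x\<close> m by auto
  show "s = [] \<or> v \<noteq> [] \<and> hd s = 1"
  proof (cases "s = []")
    case False
    then have "r \<noteq> []" "hd s = 1"
      using split(3) hd_dropWhile[of "\<lambda>x. x \<noteq> 1" r] by auto
    moreover have "hd r \<noteq> 1"
      using \<open>r \<noteq> []\<close> hd_dropWhile[of "\<lambda>x. x = 1" w] unfolding r_def by simp
    ultimately show ?thesis
      using m unfolding m_def by (auto simp: takeWhile_eq_Nil_iff)
  qed simp
qed

text \<open>Right after the initial 1s an RGW can only continue with 2; together with that 2,
  a later letter \<open>\<ge> 3\<close> behind a 1 would form 1213.\<close>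

lemma set_tail_subset_ones_twos:
  assumes "rgw (replicate j 1 @ map Suc v @ 1 # y)"
    and "\<not> contains (replicate j 1 @ map Suc v @ 1 # y) [1, 2, 1, 3]"
    and "1 \<le> j" "v \<noteq> []" "\<forall>x\<in>set v. 1 \<le> x"
  shows "set y \<subseteq> {1, 2}"
proof
  let ?w = "replicate j 1 @ map Suc v @ 1 # y"
  fix c
  assume "c \<in> set y"
  have "Suc (hd v) \<le> 2"
    using rgw_letter_after_ones[of j "Suc (hd v)" "map Suc (tl v) @ 1 # y"] assms(1,3,4)
    by (cases v) auto
  then have "subseq [2] (map Suc v)"
    using assms(4,5) by (cases v) auto
  moreover have "subseq [1] (replicate j 1)"
    using assms(3) by (cases j) auto
  moreover have "subseq [1, c] (1 # y)"
    using \<open>c \<in> set y\<close> by (simp add: subseq_singleton_left)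
  ultimately have "subseq ([1] @ [2] @ [1, c]) ?w"
    by (intro list_emb_append_mono)
  then have occ: "subseq [1, 2, 1, c] ?w"
    by simp
  show "c \<in> {1, 2}"
  proof (rule ccontr)
    assume "c \<notin> {1, 2}"
    with rgw_letter_bounds[OF assms(1)] \<open>c \<in> set y\<close> have "2 < c"
      by fastforce
    with occ have "contains ?w [1, 2, 1, 3]"
      unfolding contains_def order_iso_1213_iff by (intro exI[of _ "[1, 2, 1, c]"]) auto
    with assms(2) show False ..
  qed
qed

lemma join_blocks_mem_avoiders:
  assumes "(j, v, s) \<in> block_triples t n" "rgw t" "t \<noteq> []" "1 < last t"
  shows "join_blocks (j, v, s) \<in> avoiders (1 # plus1 t) n"
proof -
  have j: "1 \<le> j" and v: "rgw v" "\<not> contains v [1, 2, 1, 3]" "\<not> contains v t"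
    and len: "j + length v + length s = n" and s: "s = [] \<or> v \<noteq> [] \<and> set s \<subseteq> {1, 2}"
    using assms(1) by (auto simp: block_triples_def avoiders_def)
  have s12: "set s \<subseteq> {1, 2}"
    using s by auto
  have v1: "\<forall>x\<in>set v. 1 \<le> x"
    using rgw_letter_bounds[OF v(1)] by auto
  have "rgw (replicate j 1 @ map Suc v)"
    using rgw_ones_shift_iff[OF j v1] v(1) by simp
  moreover have "replicate j 1 @ map Suc v \<noteq> []"
    using j by auto
  ultimately have "rgw (replicate j 1 @ map Suc v @ s)"
    using rgw_append_ones_twos[OF _ _ s12] by (metis append_assoc)
  moreover have "\<not> contains (replicate j 1 @ map Suc v @ s) [1, 2, 1, 3]"
    using contains_1213_shifted_blockD[OF _ s12 v1] v(2) by blast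
  moreover have "\<not> contains (replicate j 1 @ map Suc v @ s) (1 # plus1 t)"
    using contains_Cons_plus1_shifted_blockD[OF _ s12 assms(2-4)] v(3) by blast
  ultimately show ?thesis
    using len by (simp add: avoiders_def)
qed

lemma split_blocks_mem_block_triples:
  assumes "w \<in> avoiders (1 # plus1 t) n" "1 \<le> n" "rgw t"
  shows "split_blocks w \<in> block_triples t n"
proof -
  obtain j v s where split: "split_blocks w = (j, v, s)"
    by (metis prod_cases3)
  have w: "rgw w" "length w = n" "\<not> contains w [1, 2, 1, 3]" "\<not> contains w (1 # plus1 t)"
    using assms(1) by (auto simp: avoiders_def)
  then have "w \<noteq> []"
    using assms(2) by auto
  note blocks = join_split_blocks[OF w(1) this split]
  have w_eq: "w = replicate j 1 @ map Suc v @ s"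
    using blocks(1) by simp
  have "rgw v"
    using rgw_appendD[of "replicate j 1 @ map Suc v" s] w(1) w_eq rgw_ones_shift_iff[OF blocks(2,3)]
    by simp
  moreover have "\<not> contains v [1, 2, 1, 3]"
    using contains_shifted_infix[of v _ "replicate j 1" s] w(3) w_eq by auto
  moreover have "\<not> contains v t"
  proof
    assume "contains v t"
    then have "contains (1 # replicate (j - 1) 1 @ map Suc v @ s) (1 # plus1 t)"
      using contains_Cons_plus1_shifted blocks(3) rgw_letter_bounds[OF assms(3)] by blast
    moreover have "1 # replicate (j - 1) 1 = replicate j (1::nat)"
      using blocks(2) by (cases j) auto
    ultimately show False
      using w(4) w_eq by (metis append_Cons)
  qed
  moreover have "s = [] \<or> v \<noteq> [] \<and> hd s = 1 \<and> set s \<subseteq> {1, 2}"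
  proof (cases s)
    case (Cons c y)
    with blocks(4) have "c = 1" "v \<noteq> []"
      by auto
    with Cons show ?thesis
      using set_tail_subset_ones_twos[of j v y] w(1,3) w_eq blocks(2,3) by auto
  qed simp
  ultimately show ?thesis
    using split w(2) w_eq blocks(2) by (auto simp: block_triples_def avoiders_def)
qed

lemma bij_betw_join_blocks:
  assumes "rgw t" "t \<noteq> []" "1 < last t" "1 \<le> n"
  shows "bij_betw join_blocks (block_triples t n) (avoiders (1 # plus1 t) n)"
proof (rule bij_betw_byWitness[where f' = split_blocks])
  show "\<forall>x\<in>block_triples t n. split_blocks (join_blocks x) = x"
    using split_join_blocks rgw_letter_bounds by (fastforce simp: block_triples_def avoiders_def)
  show "\<forall>w\<in>avoiders (1 # plus1 t) n. join_blocks (split_blocks w) = w"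
  proof
    fix w
    assume "w \<in> avoiders (1 # plus1 t) n"
    then have "rgw w" "w \<noteq> []"
      using assms(4) by (auto simp: avoiders_def)
    then show "join_blocks (split_blocks w) = w"
      using join_split_blocks(1) by (metis prod_cases3)
  qed
  show "join_blocks ` block_triples t n \<subseteq> avoiders (1 # plus1 t) n"
    using join_blocks_mem_avoiders assms(1-3) by (auto simp del: join_blocks_apply)
  show "split_blocks ` avoiders (1 # plus1 t) n \<subseteq> block_triples t n"
    using split_blocks_mem_block_triples assms(1,4) by blast
qed

definition run_tail_pairs :: "nat \<Rightarrow> (nat \<times> nat list) set" where
  "run_tail_pairs i = {(j, y). 1 \<le> j \<and> set y \<subseteq> {1, 2} \<and> j + 1 + length y = i}"

lemma run_tail_pairs_eq_Sigma:
  "run_tail_pairs i = Sigma {1..<i} (\<lambda>j. {y. set y \<subseteq> {1, 2} \<and> length y = i - 1 - j})"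
  by (auto simp: run_tail_pairs_def)

lemma finite_run_tail_pairs: "finite (run_tail_pairs i)"
  unfolding run_tail_pairs_eq_Sigma by (auto intro: finite_lists_length_eq)

lemma card_run_tail_pairs: "card (run_tail_pairs i) = 2 ^ (i - 1) - 1"
proof -
  have "card (run_tail_pairs i) = (\<Sum>j\<in>{1..<i}. 2 ^ (i - 1 - j))"
    unfolding run_tail_pairs_eq_Sigma
    by (simp add: card_SigmaI finite_lists_length_eq card_lists_length_eq numeral_2_eq_2)
  also have "\<dots> = (\<Sum>q\<in>{q. q < i - 1}. 2 ^ q)"
    by (rule sum.reindex_bij_witness[of _ "\<lambda>q. i - 1 - q" "\<lambda>j. i - 1 - j"]) auto
  also have "\<dots> = 2 ^ (i - 1) - 1"
    by (simp add: mask_eq_sum_exp_nat)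
  finally show ?thesis .
qed

lemma block_triples_eq:
  "block_triples t n =
     (\<lambda>(j, v). (j, v, [])) ` Sigma {1..n} (\<lambda>j. avoiders t (n - j)) \<union>
     (\<lambda>(i, v, j, y). (j, v, 1 # y)) ` Sigma {1..<n} (\<lambda>i. avoiders t (n - i) \<times> run_tail_pairs i)"
  (is "_ = ?A \<union> ?B")
proof (intro equalityI subsetI)
  fix x
  assume "x \<in> block_triples t n"
  then obtain j v s where x: "x = (j, v, s)" "1 \<le> j" "v \<in> avoiders t (length v)"
    "j + length v + length s = n" "s = [] \<or> v \<noteq> [] \<and> hd s = 1 \<and> set s \<subseteq> {1, 2}"
    by (auto simp: block_triples_def)
  show "x \<in> ?A \<union> ?B"
  proof (cases s)
    case Nil
    with x have "(j, v) \<in> Sigma {1..n} (\<lambda>j. avoiders t (n - j))"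
      by auto
    then have "(j, v, []) \<in> ?A"
      by (rule rev_image_eqI) simp
    with x Nil show ?thesis
      by simp
  next
    case (Cons c y)
    with x have "(j + 1 + length y, v, j, y) \<in> Sigma {1..<n} (\<lambda>i. avoiders t (n - i) \<times> run_tail_pairs i)"
      by (auto simp: run_tail_pairs_def)
    then have "(j, v, 1 # y) \<in> ?B"
      by (rule rev_image_eqI) simp
    with x Cons show ?thesis
      by simp
  qed
next
  fix x
  assume "x \<in> ?A \<union> ?B"
  then consider (run) j v where "x = (j, v, [])" "j \<in> {1..n}" "v \<in> avoiders t (n - j)"
    | (tail) i v j y where "x = (j, v, 1 # y)" "i \<in> {1..<n}" "v \<in> avoiders t (n - i)"
      "(j, y) \<in> run_tail_pairs i"
    by auto
  then show "x \<in> block_triples t n"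
    by cases (auto simp: block_triples_def run_tail_pairs_def avoiders_def)
qed

lemma card_block_triples:
  "card (block_triples t n) = (\<Sum>i = 1..n. card (avoiders t (n - i)))
     + (\<Sum>i = 1..<n. card (avoiders t (n - i)) * (2 ^ (i - 1) - 1))"
proof -
  let ?S1 = "Sigma {1..n} (\<lambda>i. avoiders t (n - i))"
  let ?S2 = "Sigma {1..<n} (\<lambda>i. avoiders t (n - i) \<times> run_tail_pairs i)"
  let ?g1 = "\<lambda>(j, v). (j, v, []) :: nat \<times> nat list \<times> nat list"
  let ?g2 = "\<lambda>(i, v, j, y). (j, v, 1 # y) :: nat \<times> nat list \<times> nat list"
  have fin: "finite ?S1" "finite ?S2"
    by (auto intro!: finite_SigmaI simp: finite_avoiders finite_run_tail_pairs)
  have inj: "inj_on ?g1 ?S1" "inj_on ?g2 ?S2"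
    by (auto simp: inj_on_def run_tail_pairs_def)
  have "card (block_triples t n) = card (?g1 ` ?S1) + card (?g2 ` ?S2)"
    unfolding block_triples_eq by (rule card_Un_disjoint) (use fin in auto)
  also have "\<dots> = card ?S1 + card ?S2"
    using card_image[OF inj(1)] card_image[OF inj(2)] by simp
  also have "card ?S1 = (\<Sum>i = 1..n. card (avoiders t (n - i)))"
    by (simp add: card_SigmaI finite_avoiders)
  also have "card ?S2 = (\<Sum>i = 1..<n. card (avoiders t (n - i)) * (2 ^ (i - 1) - 1))"
    by (simp add: card_SigmaI finite_avoiders finite_run_tail_pairs card_cartesian_product
        card_run_tail_pairs)
  finally show ?thesis .
qed

lemma card_avoiders_Cons_plus1:
  assumes "rgw t" "t \<noteq> []" "1 < last t" "1 \<le> n"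
  shows "card (avoiders (1 # plus1 t) n) = (\<Sum>i = 1..n. card (avoiders t (n - i)))
     + (\<Sum>i = 1..<n. card (avoiders t (n - i)) * (2 ^ (i - 1) - 1))"
  using bij_betw_same_card[OF bij_betw_join_blocks[OF assms]] card_block_triples by simp

section \<open>Generating functions\<close>

lemma fps_divide_eqI:
  fixes a b c :: "'a::field fps"
  assumes "fps_nth b 0 \<noteq> 0" "c * b = a"
  shows "a / b = c"
proof -
  have "a / b = c * (b * inverse b)"
    using assms by (simp add: fps_divide_unit mult.assoc)
  then show ?thesis
    using inverse_mult_eq_1'[OF assms(1)] by simp
qed

lemma fps_X_divide_one_minus_X: "fps_X / (1 - fps_X) = Abs_fps (\<lambda>n. if n = 0 then 0 else 1 :: 'a::field)"
proof (rule fps_divide_eqI)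
  show "Abs_fps (\<lambda>n. if n = 0 then 0 else 1) * (1 - fps_X) = (fps_X :: 'a fps)"
  proof (rule fps_ext)
    fix n
    show "fps_nth (Abs_fps (\<lambda>n. if n = 0 then 0 else 1) * (1 - fps_X)) n = fps_nth (fps_X :: 'a fps) n"
      by (cases n) (simp_all add: algebra_simps)
  qed
qed simp

lemma fps_X_squared_divide:
  "fps_X ^ 2 / ((1 - fps_X) * (1 - 2 * fps_X)) = Abs_fps (\<lambda>n. 2 ^ (n - 1) - 1 :: 'a::field)"
proof (rule fps_divide_eqI)
  let ?G = "Abs_fps (\<lambda>n. 2 ^ (n - 1) - 1 :: 'a)"
  have "?G * ((1 - fps_X) * (1 - 2 * fps_X))
      = ?G - fps_const 3 * (fps_X * ?G) + fps_const 2 * (fps_X * (fps_X * ?G))"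
    by (simp add: algebra_simps power2_eq_square numeral_fps_const[symmetric])
  also have "\<dots> = fps_X ^ 2"
  proof (rule fps_ext)
    fix n
    have "n = 0 \<or> n = 1 \<or> n = 2 \<or> (\<exists>k. n = k + (3::nat))"
      by presburger
    then show "fps_nth (?G - fps_const 3 * (fps_X * ?G) + fps_const 2 * (fps_X * (fps_X * ?G))) n
        = fps_nth (fps_X ^ 2 :: 'a fps) n"
      by (elim disjE exE) (simp_all add: fps_X_mult_nth fps_X_power_nth algebra_simps)
  qed
  finally show "?G * ((1 - fps_X) * (1 - 2 * fps_X)) = fps_X ^ 2" .
qed simp

lemma H_nth: "fps_nth (H t) n = of_nat (card (avoiders t n))"
  unfolding H_def fps_nth_Abs_fps pn_eq_card_avoiders ..

lemma H_Cons_plus1: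
  assumes "rgw t" "t \<noteq> []" "1 < last t"
  shows "H (1 # plus1 t) = 1 + fps_X / (1 - fps_X) * H t
           + fps_X ^ 2 / ((1 - fps_X) * (1 - 2 * fps_X)) * (H t - 1)"
  unfolding fps_X_divide_one_minus_X fps_X_squared_divide
proof (rule fps_ext)
  fix n
  let ?h = "\<lambda>k. of_nat (card (avoiders t k)) :: rat"
  have h0: "?h 0 = 1"
    using avoiders_0[OF assms(2)] by simp
  show "fps_nth (H (1 # plus1 t)) n = fps_nth (1 + Abs_fps (\<lambda>n. if n = 0 then 0 else 1) * H t
          + Abs_fps (\<lambda>n. 2 ^ (n - 1) - 1) * (H t - 1)) n"
  proof (cases "n = 0")
    case True
    then show ?thesis
      using h0 avoiders_0[of "1 # plus1 t"] by (simp add: H_nth fps_mult_nth)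
  next
    case False
    then have "1 \<le> n"
      by simp
    have run: "fps_nth (Abs_fps (\<lambda>n. if n = 0 then 0 else 1) * H t) n = (\<Sum>i = 1..n. ?h (n - i))"
      unfolding fps_mult_nth by (rule sum.mono_neutral_cong_right) (auto simp: H_nth)
    have tail: "fps_nth (Abs_fps (\<lambda>n. 2 ^ (n - 1) - 1) * (H t - 1)) n
        = (\<Sum>i = 1..<n. (2 ^ (i - 1) - 1) * ?h (n - i))"
      unfolding fps_mult_nth
      by (rule sum.mono_neutral_cong_right) (auto simp: H_nth h0 not_less_eq_eq le_Suc_eq)
    have "of_nat (card (avoiders (1 # plus1 t) n))
        = (\<Sum>i = 1..n. ?h (n - i)) + (\<Sum>i = 1..<n. (2 ^ (i - 1) - 1) * ?h (n - i))"
      unfolding card_avoiders_Cons_plus1[OF assms \<open>1 \<le> n\<close>] of_nat_add of_nat_sum of_nat_mult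
      by (simp add: of_nat_diff one_le_power mult.commute)
    with False run tail show ?thesis
      by (simp add: H_nth)
  qed
qed

theorem theorem4p9:
  shows "(\<forall>\<tau>. rgw \<tau> \<and> \<tau> \<noteq> [] \<and> last \<tau> > 1 \<and> length (1 # plus1 \<tau>) \<ge> 2 \<longrightarrow>
           H (1 # plus1 \<tau>) = 1 + fps_X / (1 - fps_X) * H \<tau>
              + fps_X ^ 2 / ((1 - fps_X) * (1 - 2 * fps_X)) * (H \<tau> - 1))
       \<and> (\<forall>\<tau> \<tau>'. rgw \<tau> \<and> \<tau> \<noteq> [] \<and> last \<tau> > 1 \<and>
                 rgw \<tau>' \<and> \<tau>' \<noteq> [] \<and> last \<tau>' > 1 \<and>
                 (\<forall>n. pn n {[1,2,1,3], \<tau>} = pn n {[1,2,1,3], \<tau>'}) \<longrightarrow>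
                 (\<forall>n. pn n {[1,2,1,3], 1 # plus1 \<tau>} = pn n {[1,2,1,3], 1 # plus1 \<tau>'}))"
proof (intro conjI allI impI)
  fix \<tau>
  assume "rgw \<tau> \<and> \<tau> \<noteq> [] \<and> last \<tau> > 1 \<and> length (1 # plus1 \<tau>) \<ge> 2"
  then show "H (1 # plus1 \<tau>) = 1 + fps_X / (1 - fps_X) * H \<tau>
      + fps_X ^ 2 / ((1 - fps_X) * (1 - 2 * fps_X)) * (H \<tau> - 1)"
    using H_Cons_plus1 by blast
next
  fix \<tau> \<tau>' n
  assume hyps: "rgw \<tau> \<and> \<tau> \<noteq> [] \<and> last \<tau> > 1 \<and> rgw \<tau>' \<and> \<tau>' \<noteq> [] \<and> last \<tau>' > 1 \<and>
    (\<forall>n. pn n {[1,2,1,3], \<tau>} = pn n {[1,2,1,3], \<tau>'})"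
  then have "H \<tau> = H \<tau>'"
    by (simp add: H_def)
  then have "H (1 # plus1 \<tau>) = H (1 # plus1 \<tau>')"
    using H_Cons_plus1[of \<tau>] H_Cons_plus1[of \<tau>'] hyps by simp
  then show "pn n {[1,2,1,3], 1 # plus1 \<tau>} = pn n {[1,2,1,3], 1 # plus1 \<tau>'}"
    by (metis H_def fps_nth_Abs_fps of_nat_eq_iff)
qed

end
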